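(* Consider a QRW on the non-negative integers with non trivial coins. All local states of the walk are transient if and only if the state $|0\rangle\otimes|\uparrow\rangle$ is transient.
   Context: Coins: for each $i\ge0$, $C_i=(c^i_{kl})_{k,l=1,2}$ is a $2\times2$ unitary matrix with $c^i_{11}\ne0$ (non trivial). Number the pure states $|0\uparrow\rangle,|0\downarrow\rangle,|1\uparrow\rangle,|1\downarrow\rangle,\dots$ as $0,1,2,3,\dots$. The unitary transition matrix $U=(U_{j,k})$ ($U_{j,k}$ = one-step amplitude from state $j$ to state $k$) has only the non-zero entries $U_{2i,2i+2}=c^i_{11}$, $U_{2i+1,2i+2}=c^i_{12}$ ($i\ge0$), $U_{2i,2i-1}=c^i_{21}$, $U_{2i+1,2i-1}=c^i_{22}$ ($i\ge1$), $U_{0,0}=c^0_{21}$, $U_{1,0}=c^0_{22}$. A state is a unit row vector $\psi\in\ell^2$; it is recurrent if $\sum_{n\ge1}|\psi U^n\psi^\dagger|^2=\infty$ and transient otherwise. A local state is a state that is a superposition of finitely many pure states (finitely many nonzero components). *)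

theory Defs
  imports "HOL-Analysis.Analysis"
begin

text \<open>Coins: \<open>C i k l\<close> is the entry \<open>c^i_{kl}\<close> (indices k,l in {1,2}) of the i-th coin.\<close>

definition unitary2 :: "(nat \<Rightarrow> nat \<Rightarrow> complex) \<Rightarrow> bool" where
  "unitary2 M \<longleftrightarrow>
     (\<forall>k\<in>{1,2}. \<forall>l\<in>{1,2}. (\<Sum>m\<in>{1,2}. M k m * cnj (M l m)) = (if k = l then 1 else 0)) \<and>
     (\<forall>k\<in>{1,2}. \<forall>l\<in>{1,2}. (\<Sum>m\<in>{1,2}. cnj (M m k) * M m l) = (if k = l then 1 else 0))"

definition coins :: "(nat \<Rightarrow> nat \<Rightarrow> nat \<Rightarrow> complex) \<Rightarrow> bool" where
  "coins C \<longleftrightarrow> (\<forall>i. unitary2 (C i))"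

definition nontrivial_coins :: "(nat \<Rightarrow> nat \<Rightarrow> nat \<Rightarrow> complex) \<Rightarrow> bool" where
  "nontrivial_coins C \<longleftrightarrow> (\<forall>i. C i 1 1 \<noteq> 0)"

text \<open>Transition matrix: \<open>qrwU C j k\<close> is the one-step amplitude from state j to state k;
  pure state \<open>|i up>\<close> is 2i, \<open>|i down>\<close> is 2i+1.\<close>
definition qrwU :: "(nat \<Rightarrow> nat \<Rightarrow> nat \<Rightarrow> complex) \<Rightarrow> nat \<Rightarrow> nat \<Rightarrow> complex" where
  "qrwU C j k =
     (let i = j div 2 in
      if even j then
        (if k = j + 2 then C i 1 1
         else if i \<ge> 1 \<and> k = j - 1 then C i 2 1
         else if i = 0 \<and> k = 0 then C 0 2 1
         else 0)
      else
        (if k = j + 1 then C i 1 2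
         else if i \<ge> 1 \<and> k = j - 2 then C i 2 2
         else if i = 0 \<and> k = 0 then C 0 2 2
         else 0))"

definition qrw_step :: "(nat \<Rightarrow> nat \<Rightarrow> nat \<Rightarrow> complex) \<Rightarrow> (nat \<Rightarrow> complex) \<Rightarrow> nat \<Rightarrow> complex" where
  "qrw_step C \<psi> k = (\<Sum>\<^sub>\<infinity>j. \<psi> j * qrwU C j k)"

definition qrw_pow :: "(nat \<Rightarrow> nat \<Rightarrow> nat \<Rightarrow> complex) \<Rightarrow> nat \<Rightarrow> (nat \<Rightarrow> complex) \<Rightarrow> nat \<Rightarrow> complex" where
  "qrw_pow C n \<psi> = (qrw_step C ^^ n) \<psi>"

definition amp :: "(nat \<Rightarrow> nat \<Rightarrow> nat \<Rightarrow> complex) \<Rightarrow> (nat \<Rightarrow> complex) \<Rightarrow> nat \<Rightarrow> complex" where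
  "amp C \<psi> n = (\<Sum>\<^sub>\<infinity>k. qrw_pow C n \<psi> k * cnj (\<psi> k))"

definition is_state :: "(nat \<Rightarrow> complex) \<Rightarrow> bool" where
  "is_state \<psi> \<longleftrightarrow> (\<lambda>k. (norm (\<psi> k))\<^sup>2) summable_on UNIV \<and> (\<Sum>\<^sub>\<infinity>k. (norm (\<psi> k))\<^sup>2) = 1"

definition local_state :: "(nat \<Rightarrow> complex) \<Rightarrow> bool" where
  "local_state \<psi> \<longleftrightarrow> is_state \<psi> \<and> finite {k. \<psi> k \<noteq> 0}"

text \<open>Recurrent: \<open>\<Sum>_{n\<ge>1} |\<psi> U^n \<psi>^\<dagger>|^2 = \<infinity>\<close> (terms are nonnegative).\<close>
definition recurrent :: "(nat \<Rightarrow> nat \<Rightarrow> nat \<Rightarrow> complex) \<Rightarrow> (nat \<Rightarrow> complex) \<Rightarrow> bool" where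
  "recurrent C \<psi> \<longleftrightarrow> \<not> summable (\<lambda>n. (norm (amp C \<psi> (Suc n)))\<^sup>2)"

definition transient :: "(nat \<Rightarrow> nat \<Rightarrow> nat \<Rightarrow> complex) \<Rightarrow> (nat \<Rightarrow> complex) \<Rightarrow> bool" where
  "transient C \<psi> \<longleftrightarrow> \<not> recurrent C \<psi>"

definition e0 :: "nat \<Rightarrow> complex" where
  "e0 k = (if k = 0 then 1 else 0)"

end

theory Submission
  imports Defs
begin

text \<open>
  On finitely supported vectors \<open>U\<close> is an isometry, since its rows are orthonormal by unitarity
  of the coins. If \<open>|0\<up>\<rangle>\<close> is transient, then \<open>\<Sum>\<^sub>n |\<langle>U\<^sup>n f, g\<rangle>|\<^sup>2 < \<infinity>\<close> for all
  \<open>f, g\<close> in the cyclic span \<open>V\<close> of \<open>e\<^sub>0\<close> under \<open>U\<close>: for iterates of \<open>e\<^sub>0\<close> this is a shift of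
  the series for \<open>e\<^sub>0\<close>, and the property survives linear combinations. Nontriviality of the
  coins lets the walk climb: \<open>U e\<^sub>2\<^sub>i = c\<^sup>i\<^sub>1\<^sub>1 e\<^sub>2\<^sub>i\<^sub>+\<^sub>2 + c\<^sup>i\<^sub>2\<^sub>1 e\<^sub>2\<^sub>i\<^sub>-\<^sub>1\<close> and
  \<open>U e\<^sub>2\<^sub>i\<^sub>+\<^sub>1 = c\<^sup>i\<^sub>1\<^sub>2 e\<^sub>2\<^sub>i\<^sub>+\<^sub>2 + c\<^sup>i\<^sub>2\<^sub>2 e\<^sub>2\<^sub>i\<^sub>-\<^sub>1\<close>, so by induction every local state \<open>\<psi>\<close>
  has some iterate \<open>U\<^sup>N\<psi>\<close> in \<open>V\<close>. Isometry then gives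
  \<open>\<langle>U\<^sup>n\<psi>, \<psi>\<rangle> = \<langle>U\<^sup>n(U\<^sup>N\<psi>), U\<^sup>N\<psi>\<rangle>\<close>, so \<open>\<psi>\<close> is transient.
\<close>

lemma infsum_eq_sum_if_vanishes_outside:
  fixes f :: "'a \<Rightarrow> 'b::{comm_monoid_add,t2_space}"
  assumes "finite A" "\<And>k. k \<notin> A \<Longrightarrow> f k = 0"
  shows "infsum f UNIV = sum f A"
proof -
  have "infsum f UNIV = infsum f A"
    by (rule infsum_cong_neutral) (use assms in auto)
  then show ?thesis using assms(1) by simp
qed

lemma summable_norm_sq_add:
  fixes a b :: "nat \<Rightarrow> 'a::real_normed_vector"
  assumes "summable (\<lambda>n. (norm (a n))\<^sup>2)" "summable (\<lambda>n. (norm (b n))\<^sup>2)"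
  shows "summable (\<lambda>n. (norm (a n + b n))\<^sup>2)"
proof (rule summable_comparison_test')
  show "summable (\<lambda>n. 2 * (norm (a n))\<^sup>2 + 2 * (norm (b n))\<^sup>2)"
    using assms by (intro summable_add summable_mult)
  fix n
  have "(norm (a n + b n))\<^sup>2 \<le> (norm (a n) + norm (b n))\<^sup>2"
    by (simp add: norm_triangle_ineq power_mono)
  also have "\<dots> \<le> 2 * (norm (a n))\<^sup>2 + 2 * (norm (b n))\<^sup>2"
    using sum_squares_bound[of "norm (a n)" "norm (b n)"] by (simp add: power2_sum)
  finally show "norm ((norm (a n + b n))\<^sup>2) \<le> 2 * (norm (a n))\<^sup>2 + 2 * (norm (b n))\<^sup>2"
    by simp
qed

lemma summable_norm_sq_mult:
  fixes a :: "nat \<Rightarrow> 'a::real_normed_div_algebra"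
  assumes "summable (\<lambda>n. (norm (a n))\<^sup>2)"
  shows "summable (\<lambda>n. (norm (c * a n))\<^sup>2)"
  using summable_mult[OF assms, of "(norm c)\<^sup>2"] by (simp add: norm_mult power_mult_distrib)

text \<open>
  The pure state \<open>j\<close> sits at site \<open>i = j div 2\<close> and its spin selects the coin column
  \<open>coin_column j\<close>; one step sends it to \<open>|i+1 \<up>\<rangle>\<close> with amplitude \<open>c\<^sup>i\<^sub>1\<^sub>,\<^sub>c\<^sub>o\<^sub>l\<close> and to
  \<open>|i-1 \<down>\<rangle>\<close> (reflected to \<open>|0 \<up>\<rangle>\<close> at site 0) with amplitude \<open>c\<^sup>i\<^sub>2\<^sub>,\<^sub>c\<^sub>o\<^sub>l\<close>.
\<close>

definition right_target :: "nat \<Rightarrow> nat" where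
  "right_target j = 2 * (j div 2) + 2"

definition left_target :: "nat \<Rightarrow> nat" where
  "left_target j = (if j div 2 \<ge> 1 then 2 * (j div 2) - 1 else 0)"

definition coin_column :: "nat \<Rightarrow> nat" where
  "coin_column j = (if even j then 1 else 2)"

lemma right_target_ne_left_target: "right_target j \<noteq> left_target l"
proof -
  have "odd (left_target l) \<or> left_target l = 0" unfolding left_target_def by auto
  moreover have "even (right_target j)" "right_target j \<noteq> 0" unfolding right_target_def by auto
  ultimately show ?thesis by auto
qed

lemma qrwU_eq:
  "qrwU C j k = (if k = right_target j then C (j div 2) 1 (coin_column j)
                 else if k = left_target j then C (j div 2) 2 (coin_column j) else 0)"
proof (cases "even j")
  case True
  then obtain i where "j = 2 * i" by blast
  then show ?thesis
    unfolding qrwU_def right_target_def left_target_def coin_column_def Let_def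
    by (cases "i = 0") auto
next
  case False
  then obtain i where "j = 2 * i + 1" using oddE by blast
  then show ?thesis
    unfolding qrwU_def right_target_def left_target_def coin_column_def Let_def
    by (cases "i = 0") auto
qed

lemma qrwU_nonzero_imp_near: "qrwU C j k \<noteq> 0 \<Longrightarrow> j \<le> k + 2 \<and> k \<le> j + 2"
  unfolding qrwU_eq right_target_def left_target_def by (auto split: if_splits)

lemma qrwU_rows_orthonormal:
  assumes "coins C" "finite K"
    and "{right_target j, left_target j, right_target l, left_target l} \<subseteq> K"
  shows "(\<Sum>k\<in>K. qrwU C j k * cnj (qrwU C l k)) = (if j = l then 1 else 0)"
proof (cases "j div 2 = l div 2")
  case False
  then have "right_target j \<noteq> right_target l" "left_target j \<noteq> left_target l"
    unfolding right_target_def left_target_def by (auto split: if_splits)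
  then have "(\<Sum>k\<in>K. qrwU C j k * cnj (qrwU C l k)) = 0"
    using right_target_ne_left_target[of j l] right_target_ne_left_target[of l j]
    by (intro sum.neutral) (auto simp: qrwU_eq)
  with False show ?thesis by auto
next
  case True
  define i where "i = j div 2"
  define a where "a = C i 1 (coin_column j) * cnj (C i 1 (coin_column l))"
  define b where "b = C i 2 (coin_column j) * cnj (C i 2 (coin_column l))"
  have targets: "right_target l = right_target j" "left_target l = left_target j"
    using True unfolding right_target_def left_target_def by auto
  have "(\<Sum>k\<in>K. qrwU C j k * cnj (qrwU C l k))
      = (\<Sum>k\<in>K. (if k = right_target j then a else 0) + (if k = left_target j then b else 0))"
    using True right_target_ne_left_target[of j j]
    by (intro sum.cong) (auto simp: qrwU_eq targets a_def b_def i_def)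
  also have "\<dots> = a + b"
    using assms(2,3) by (simp add: sum.distrib)
  also have "\<dots> = (\<Sum>m\<in>{1,2}. cnj (C i m (coin_column l)) * C i m (coin_column j))"
    by (simp add: a_def b_def mult.commute)
  also have "\<dots> = (if coin_column l = coin_column j then 1 else 0)"
    using assms(1) unfolding coins_def unitary2_def coin_column_def by auto
  also have "\<dots> = (if j = l then 1 else 0)"
  proof -
    have "j = 2 * (j div 2) + j mod 2" "l = 2 * (l div 2) + l mod 2"
      by simp_all
    then have "coin_column l = coin_column j \<longleftrightarrow> j = l"
      using True unfolding coin_column_def by (auto simp: even_iff_mod_2_eq_zero)
    then show ?thesis by simp
  qed
  finally show ?thesis .
qed

definition vanishes_above :: "nat \<Rightarrow> (nat \<Rightarrow> complex) \<Rightarrow> bool" where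
  "vanishes_above B x \<longleftrightarrow> (\<forall>k>B. x k = 0)"

lemma vanishes_above_mono: "vanishes_above B x \<Longrightarrow> B \<le> B' \<Longrightarrow> vanishes_above B' x"
  unfolding vanishes_above_def by auto

lemma qrw_step_eq_sum: "qrw_step C x k = (\<Sum>j\<le>k + 2. x j * qrwU C j k)"
  unfolding qrw_step_def
  by (rule infsum_eq_sum_if_vanishes_outside) (use qrwU_nonzero_imp_near in force)+

lemma qrw_step_eq_sum_if_vanishes_above:
  "vanishes_above B x \<Longrightarrow> qrw_step C x k = (\<Sum>j\<le>B. x j * qrwU C j k)"
  unfolding qrw_step_def
  by (rule infsum_eq_sum_if_vanishes_outside) (auto simp: vanishes_above_def not_le)

lemma vanishes_above_qrw_step:
  assumes "vanishes_above B x"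
  shows "vanishes_above (B + 2) (qrw_step C x)"
  unfolding vanishes_above_def
proof (intro allI impI)
  fix k assume "k > B + 2"
  then have "x j * qrwU C j k = 0" if "j \<le> B" for j
    using qrwU_nonzero_imp_near[of C j k] that by auto
  then show "qrw_step C x k = 0"
    unfolding qrw_step_eq_sum_if_vanishes_above[OF assms] by (auto intro: sum.neutral)
qed

lemma qrw_pow_0 [simp]: "qrw_pow C 0 x = x"
  unfolding qrw_pow_def by simp

lemma qrw_pow_Suc: "qrw_pow C (Suc n) x = qrw_step C (qrw_pow C n x)"
  unfolding qrw_pow_def by simp

lemma qrw_pow_Suc': "qrw_pow C (Suc n) x = qrw_pow C n (qrw_step C x)"
  unfolding qrw_pow_def by (simp add: funpow_Suc_right del: funpow.simps)

lemma qrw_pow_add: "qrw_pow C (m + n) x = qrw_pow C m (qrw_pow C n x)"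
  unfolding qrw_pow_def by (simp add: funpow_add)

lemma vanishes_above_qrw_pow: "vanishes_above B x \<Longrightarrow> vanishes_above (B + 2 * n) (qrw_pow C n x)"
proof (induction n)
  case (Suc n)
  then show ?case using vanishes_above_qrw_step[of "B + 2 * n" "qrw_pow C n x" C]
    by (simp add: qrw_pow_Suc)
qed simp

lemma qrw_step_additive: "qrw_step C (\<lambda>k. x k + y k) = (\<lambda>k. qrw_step C x k + qrw_step C y k)"
  by (rule ext) (simp only: qrw_step_eq_sum distrib_right sum.distrib)

lemma qrw_step_scale: "qrw_step C (\<lambda>k. c * x k) = (\<lambda>k. c * qrw_step C x k)"
  by (rule ext) (simp only: qrw_step_eq_sum sum_distrib_left mult.assoc)

lemma qrw_pow_additive: "qrw_pow C n (\<lambda>k. x k + y k) = (\<lambda>k. qrw_pow C n x k + qrw_pow C n y k)"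
  by (induction n) (simp_all add: qrw_pow_Suc qrw_step_additive)

lemma qrw_pow_scale: "qrw_pow C n (\<lambda>k. c * x k) = (\<lambda>k. c * qrw_pow C n x k)"
  by (induction n) (simp_all add: qrw_pow_Suc qrw_step_scale)

subsection \<open>The sesquilinear form and isometry\<close>

definition braket :: "(nat \<Rightarrow> complex) \<Rightarrow> (nat \<Rightarrow> complex) \<Rightarrow> complex" where
  "braket x y = (\<Sum>\<^sub>\<infinity>k. x k * cnj (y k))"

lemma amp_eq_braket: "amp C \<psi> n = braket (qrw_pow C n \<psi>) \<psi>"
  unfolding amp_def braket_def ..

lemma braket_eq_sum_left: "vanishes_above B x \<Longrightarrow> braket x y = (\<Sum>k\<le>B. x k * cnj (y k))"
  unfolding braket_def
  by (rule infsum_eq_sum_if_vanishes_outside) (auto simp: vanishes_above_def not_le)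

lemma braket_eq_sum_right: "vanishes_above B y \<Longrightarrow> braket x y = (\<Sum>k\<le>B. x k * cnj (y k))"
  unfolding braket_def
  by (rule infsum_eq_sum_if_vanishes_outside) (auto simp: vanishes_above_def not_le)

lemma braket_add_left: "vanishes_above B z \<Longrightarrow> braket (\<lambda>k. x k + y k) z = braket x z + braket y z"
  by (simp add: braket_eq_sum_right distrib_right sum.distrib)

lemma braket_mult_left: "vanishes_above B z \<Longrightarrow> braket (\<lambda>k. c * x k) z = c * braket x z"
  by (simp add: braket_eq_sum_right sum_distrib_left mult.assoc)

lemma braket_add_right: "vanishes_above B x \<Longrightarrow> braket x (\<lambda>k. y k + z k) = braket x y + braket x z"
  by (simp add: braket_eq_sum_left distrib_left sum.distrib)

lemma braket_mult_right: "vanishes_above B x \<Longrightarrow> braket x (\<lambda>k. c * y k) = cnj c * braket x y"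
  by (simp add: braket_eq_sum_left sum_distrib_left mult_ac)

lemma braket_qrw_step:
  assumes "coins C" "vanishes_above B x" "vanishes_above B y"
  shows "braket (qrw_step C x) (qrw_step C y) = braket x y"
proof -
  have "braket (qrw_step C x) (qrw_step C y) = (\<Sum>k\<le>B + 2. qrw_step C x k * cnj (qrw_step C y k))"
    by (rule braket_eq_sum_left[OF vanishes_above_qrw_step[OF assms(2)]])
  also have "\<dots> = (\<Sum>k\<le>B + 2. \<Sum>j\<le>B. \<Sum>l\<le>B. x j * cnj (y l) * (qrwU C j k * cnj (qrwU C l k)))"
    by (simp add: qrw_step_eq_sum_if_vanishes_above[OF assms(2)]
        qrw_step_eq_sum_if_vanishes_above[OF assms(3)] sum_product mult_ac)
  also have "\<dots> = (\<Sum>j\<le>B. \<Sum>l\<le>B. x j * cnj (y l) * (\<Sum>k\<le>B + 2. qrwU C j k * cnj (qrwU C l k)))"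
    unfolding sum_distrib_left by (subst sum.swap, rule sum.cong[OF refl], rule sum.swap)
  also have "\<dots> = (\<Sum>j\<le>B. \<Sum>l\<le>B. x j * cnj (y l) * (if j = l then 1 else 0))"
  proof (intro sum.cong refl)
    fix j l assume "j \<in> {..B}" "l \<in> {..B}"
    then have "{right_target j, left_target j, right_target l, left_target l} \<subseteq> {..B + 2}"
      unfolding right_target_def left_target_def by auto
    then show "x j * cnj (y l) * (\<Sum>k\<le>B + 2. qrwU C j k * cnj (qrwU C l k))
             = x j * cnj (y l) * (if j = l then 1 else 0)"
      by (simp only: qrwU_rows_orthonormal[OF assms(1) finite_atMost])
  qed
  also have "\<dots> = braket x y"
    by (simp add: braket_eq_sum_left[OF assms(2)] if_distrib cong: if_cong)
  finally show ?thesis .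
qed

lemma braket_qrw_pow:
  assumes "coins C" "vanishes_above B x" "vanishes_above B y"
  shows "braket (qrw_pow C n x) (qrw_pow C n y) = braket x y"
  using assms(2,3)
proof (induction n arbitrary: x y B)
  case (Suc n)
  have "braket (qrw_pow C (Suc n) x) (qrw_pow C (Suc n) y)
      = braket (qrw_pow C n (qrw_step C x)) (qrw_pow C n (qrw_step C y))"
    by (simp add: qrw_pow_Suc')
  also have "\<dots> = braket (qrw_step C x) (qrw_step C y)"
    by (rule Suc.IH[OF vanishes_above_qrw_step[OF Suc.prems(1)] vanishes_above_qrw_step[OF Suc.prems(2)]])
  also have "\<dots> = braket x y"
    using Suc.prems by (rule braket_qrw_step[OF assms(1)])
  finally show ?case .
qed simp

subsection \<open>The cyclic span of \<open>e0\<close>\<close>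

inductive cyclic_span :: "(nat \<Rightarrow> nat \<Rightarrow> nat \<Rightarrow> complex) \<Rightarrow> (nat \<Rightarrow> complex) \<Rightarrow> bool"
  for C where
  orbit: "cyclic_span C (qrw_pow C m e0)"
| add: "cyclic_span C f \<Longrightarrow> cyclic_span C g \<Longrightarrow> cyclic_span C (\<lambda>k. f k + g k)"
| mult: "cyclic_span C f \<Longrightarrow> cyclic_span C (\<lambda>k. c * f k)"

lemma vanishes_above_e0: "vanishes_above 0 e0"
  unfolding vanishes_above_def e0_def by auto

lemma cyclic_span_imp_vanishes_above: "cyclic_span C f \<Longrightarrow> \<exists>B. vanishes_above B f"
proof (induction rule: cyclic_span.induct)
  case (orbit m)
  then show ?case using vanishes_above_qrw_pow[OF vanishes_above_e0] by blast
next
  case (add f g)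
  then obtain B1 B2 where "vanishes_above B1 f" "vanishes_above B2 g" by blast
  then have "vanishes_above (max B1 B2) f" "vanishes_above (max B1 B2) g"
    by (auto intro: vanishes_above_mono)
  then have "vanishes_above (max B1 B2) (\<lambda>k. f k + g k)"
    unfolding vanishes_above_def by simp
  then show ?case by blast
next
  case (mult f c)
  then show ?case unfolding vanishes_above_def by auto
qed

lemma cyclic_span_qrw_pow: "cyclic_span C f \<Longrightarrow> cyclic_span C (qrw_pow C n f)"
proof (induction rule: cyclic_span.induct)
  case (orbit m)
  then show ?case using cyclic_span.orbit[of C "n + m"] by (simp add: qrw_pow_add)
qed (simp_all add: qrw_pow_additive qrw_pow_scale cyclic_span.add cyclic_span.mult)

text \<open>After a shift by \<open>l\<close>, the isometry turns \<open>\<langle>U\<^sup>n\<^sup>+\<^sup>l U\<^sup>m e\<^sub>0, U\<^sup>l e\<^sub>0\<rangle>\<close> into \<open>amp C e0 (n + m)\<close>.\<close>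

lemma summable_braket_orbit_e0:
  assumes "coins C" and summable_e0: "summable (\<lambda>n. (norm (amp C e0 n))\<^sup>2)"
  shows "summable (\<lambda>n. (norm (braket (qrw_pow C n (qrw_pow C m e0)) (qrw_pow C l e0)))\<^sup>2)"
proof -
  define t where "t n = (norm (braket (qrw_pow C n (qrw_pow C m e0)) (qrw_pow C l e0)))\<^sup>2" for n
  have "braket (qrw_pow C (n + l) (qrw_pow C m e0)) (qrw_pow C l e0) = amp C e0 (n + m)" for n
  proof -
    have "vanishes_above (2 * (n + m)) (qrw_pow C (n + m) e0)"
      using vanishes_above_qrw_pow[OF vanishes_above_e0, where n = "n + m"] by simp
    moreover have "vanishes_above (2 * (n + m)) e0"
      by (rule vanishes_above_mono[OF vanishes_above_e0]) simp
    moreover have "qrw_pow C (n + l) (qrw_pow C m e0) = qrw_pow C l (qrw_pow C (n + m) e0)"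
      by (simp add: qrw_pow_add[symmetric] ac_simps)
    ultimately show ?thesis
      by (simp add: braket_qrw_pow[OF assms(1)] amp_eq_braket)
  qed
  then have "summable (\<lambda>n. t (n + l))"
    using summable_e0 summable_iff_shift[of "\<lambda>n. (norm (amp C e0 n))\<^sup>2" m] by (simp add: t_def)
  then show ?thesis
    unfolding t_def[symmetric] by (rule summable_iff_shift[THEN iffD1])
qed

lemma summable_braket_cyclic_span_orbit_e0:
  assumes "coins C" "summable (\<lambda>n. (norm (amp C e0 n))\<^sup>2)" "cyclic_span C f"
  shows "summable (\<lambda>n. (norm (braket (qrw_pow C n f) (qrw_pow C l e0)))\<^sup>2)"
  using assms(3)
proof (induction rule: cyclic_span.induct)
  case (orbit m)
  then show ?case by (rule summable_braket_orbit_e0[OF assms(1,2)])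
next
  case (add f g)
  have "vanishes_above (0 + 2 * l) (qrw_pow C l e0)"
    by (rule vanishes_above_qrw_pow[OF vanishes_above_e0])
  then show ?case
    using summable_norm_sq_add[OF add.IH] by (simp add: qrw_pow_additive braket_add_left)
next
  case (mult f c)
  have "vanishes_above (0 + 2 * l) (qrw_pow C l e0)"
    by (rule vanishes_above_qrw_pow[OF vanishes_above_e0])
  then show ?case
    using summable_norm_sq_mult[OF mult.IH] by (simp add: qrw_pow_scale braket_mult_left)
qed

lemma summable_braket_cyclic_span:
  assumes "coins C" "summable (\<lambda>n. (norm (amp C e0 n))\<^sup>2)" "cyclic_span C f" "cyclic_span C g"
  shows "summable (\<lambda>n. (norm (braket (qrw_pow C n f) g))\<^sup>2)"
  using assms(4)
proof (induction rule: cyclic_span.induct)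
  case (orbit m)
  then show ?case by (rule summable_braket_cyclic_span_orbit_e0[OF assms(1-3)])
next
  case (add g1 g2)
  have "\<exists>B. vanishes_above B (qrw_pow C n f)" for n
    using cyclic_span_imp_vanishes_above[OF cyclic_span_qrw_pow[OF assms(3)]] .
  then have "braket (qrw_pow C n f) (\<lambda>k. g1 k + g2 k)
           = braket (qrw_pow C n f) g1 + braket (qrw_pow C n f) g2" for n
    using braket_add_right by blast
  then show ?case using summable_norm_sq_add[OF add.IH] by simp
next
  case (mult g c)
  have "\<exists>B. vanishes_above B (qrw_pow C n f)" for n
    using cyclic_span_imp_vanishes_above[OF cyclic_span_qrw_pow[OF assms(3)]] .
  then have "braket (qrw_pow C n f) (\<lambda>k. c * g k) = cnj c * braket (qrw_pow C n f) g" for n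
    using braket_mult_right by blast
  then show ?case using summable_norm_sq_mult[OF mult.IH] by simp
qed

subsection \<open>Every local state is eventually mapped into the cyclic span\<close>

definition reaches_cyclic_span :: "(nat \<Rightarrow> nat \<Rightarrow> nat \<Rightarrow> complex) \<Rightarrow> (nat \<Rightarrow> complex) \<Rightarrow> bool"
  where "reaches_cyclic_span C \<psi> \<longleftrightarrow> (\<exists>N. cyclic_span C (qrw_pow C N \<psi>))"

lemma reaches_cyclic_span_add:
  assumes "reaches_cyclic_span C f" "reaches_cyclic_span C g"
  shows "reaches_cyclic_span C (\<lambda>k. f k + g k)"
proof -
  obtain N1 N2 where "cyclic_span C (qrw_pow C N1 f)" "cyclic_span C (qrw_pow C N2 g)"
    using assms unfolding reaches_cyclic_span_def by blast
  then have "cyclic_span C (qrw_pow C (N2 + N1) f)" "cyclic_span C (qrw_pow C (N1 + N2) g)"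
    using cyclic_span_qrw_pow by (auto simp: qrw_pow_add)
  then have "cyclic_span C (qrw_pow C (N1 + N2) (\<lambda>k. f k + g k))"
    by (simp add: qrw_pow_additive cyclic_span.add add.commute)
  then show ?thesis unfolding reaches_cyclic_span_def by blast
qed

lemma reaches_cyclic_span_mult: "reaches_cyclic_span C f \<Longrightarrow> reaches_cyclic_span C (\<lambda>k. c * f k)"
  unfolding reaches_cyclic_span_def by (auto simp: qrw_pow_scale intro: cyclic_span.mult)

lemma reaches_cyclic_span_qrw_step_iff:
  "reaches_cyclic_span C (qrw_step C f) \<longleftrightarrow> reaches_cyclic_span C f"
proof
  assume "reaches_cyclic_span C (qrw_step C f)"
  then show "reaches_cyclic_span C f"
    unfolding reaches_cyclic_span_def by (metis qrw_pow_Suc')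
next
  assume "reaches_cyclic_span C f"
  then obtain N where "cyclic_span C (qrw_pow C N f)"
    unfolding reaches_cyclic_span_def by blast
  then have "cyclic_span C (qrw_pow C (Suc 0) (qrw_pow C N f))"
    by (rule cyclic_span_qrw_pow)
  then have "cyclic_span C (qrw_pow C N (qrw_step C f))"
    by (simp add: qrw_pow_Suc flip: qrw_pow_Suc')
  then show "reaches_cyclic_span C (qrw_step C f)"
    unfolding reaches_cyclic_span_def by blast
qed

lemma reaches_cyclic_span_cancel:
  assumes "reaches_cyclic_span C (\<lambda>k. a * u k + b * v k)" "reaches_cyclic_span C v" "a \<noteq> 0"
  shows "reaches_cyclic_span C u"
proof -
  have "reaches_cyclic_span C (\<lambda>k. (a * u k + b * v k) + (- b) * v k)"
    using reaches_cyclic_span_add[OF assms(1) reaches_cyclic_span_mult[OF assms(2)]] .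
  then have "reaches_cyclic_span C (\<lambda>k. a * u k)"
    by simp
  then have "reaches_cyclic_span C (\<lambda>k. (1 / a) * (a * u k))"
    by (rule reaches_cyclic_span_mult)
  moreover have "(\<lambda>k. (1 / a) * (a * u k)) = u"
    using assms(3) by simp
  ultimately show ?thesis by simp
qed

definition ket :: "nat \<Rightarrow> nat \<Rightarrow> complex" where
  "ket p k = (if k = p then 1 else 0)"

lemma qrw_step_ket:
  "qrw_step C (ket p) = (\<lambda>k. C (p div 2) 1 (coin_column p) * ket (right_target p) k
                           + C (p div 2) 2 (coin_column p) * ket (left_target p) k)"
proof
  fix k
  have "vanishes_above p (ket p)" unfolding vanishes_above_def ket_def by auto
  then have "qrw_step C (ket p) k = (\<Sum>j\<le>p. ket p j * qrwU C j k)"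
    by (rule qrw_step_eq_sum_if_vanishes_above)
  also have "\<dots> = (\<Sum>j\<le>p. if j = p then qrwU C p k else 0)"
    by (intro sum.cong) (auto simp: ket_def)
  also have "\<dots> = qrwU C p k"
    by simp
  finally show "qrw_step C (ket p) k = C (p div 2) 1 (coin_column p) * ket (right_target p) k
                                      + C (p div 2) 2 (coin_column p) * ket (left_target p) k"
    using right_target_ne_left_target[of p p] by (auto simp: qrwU_eq ket_def)
qed

lemma reaches_cyclic_span_ket:
  assumes "nontrivial_coins C"
  shows "reaches_cyclic_span C (ket p)"
proof -
  have "\<forall>p \<le> 2 * i. reaches_cyclic_span C (ket p)" for i
  proof (induction i)
    case 0
    have "ket 0 = qrw_pow C 0 e0"
      by (auto simp: ket_def e0_def)
    then have "reaches_cyclic_span C (ket 0)"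
      unfolding reaches_cyclic_span_def using cyclic_span.orbit[of C 0] by (metis qrw_pow_0)
    then show ?case by simp
  next
    case (Suc i)
    have targets: "right_target (2 * i) = 2 * i + 2" "right_target (2 * i + 1) = 2 * i + 2"
      "left_target (2 * i) \<le> 2 * i" "left_target (2 * i + 1) \<le> 2 * i"
      unfolding right_target_def left_target_def by auto
    have site: "(2 * i) div 2 = i" "(2 * i + 1) div 2 = i" by auto
    have col: "coin_column (2 * i) = 1" "coin_column (2 * i + 1) = 2"
      unfolding coin_column_def by auto
    have "reaches_cyclic_span C (qrw_step C (ket (2 * i)))"
      using Suc.IH reaches_cyclic_span_qrw_step_iff by auto
    then have "reaches_cyclic_span C
        (\<lambda>k. C i 1 1 * ket (2 * i + 2) k + C i 2 1 * ket (left_target (2 * i)) k)"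
      by (simp only: qrw_step_ket targets(1,2) site col)
    then have even_next: "reaches_cyclic_span C (ket (2 * i + 2))"
      by (rule reaches_cyclic_span_cancel)
        (use Suc.IH targets assms in \<open>auto simp: nontrivial_coins_def\<close>)
    have "reaches_cyclic_span C
        (\<lambda>k. C i 1 2 * ket (2 * i + 2) k + C i 2 2 * ket (left_target (2 * i + 1)) k)"
      using Suc.IH targets even_next by (intro reaches_cyclic_span_add reaches_cyclic_span_mult) auto
    then have "reaches_cyclic_span C (qrw_step C (ket (2 * i + 1)))"
      by (simp only: qrw_step_ket targets(1,2) site col)
    then have odd_next: "reaches_cyclic_span C (ket (2 * i + 1))"
      by (simp add: reaches_cyclic_span_qrw_step_iff)
    show ?case
    proof (intro allI impI)
      fix p assume "p \<le> 2 * Suc i"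
      then consider "p \<le> 2 * i" | "p = 2 * i + 1" | "p = 2 * i + 2" by fastforce
      then show "reaches_cyclic_span C (ket p)"
        using Suc.IH odd_next even_next by cases auto
    qed
  qed
  then show ?thesis
    by (metis le_add2 mult_2)
qed

lemma reaches_cyclic_span_if_vanishes_above:
  assumes "nontrivial_coins C" "vanishes_above B \<psi>"
  shows "reaches_cyclic_span C \<psi>"
proof -
  have "reaches_cyclic_span C (\<lambda>k. \<Sum>p\<le>n. \<psi> p * ket p k)" for n
  proof (induction n)
    case 0
    then show ?case using reaches_cyclic_span_mult[OF reaches_cyclic_span_ket[OF assms(1)]] by simp
  next
    case (Suc n)
    then show ?case
      using reaches_cyclic_span_add[OF Suc reaches_cyclic_span_mult[OF reaches_cyclic_span_ket[OF assms(1)]]]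
      by simp
  qed
  moreover have "(\<lambda>k. \<Sum>p\<le>B. \<psi> p * ket p k) = \<psi>"
    using assms(2) by (auto simp: ket_def vanishes_above_def if_distrib cong: if_cong)
  ultimately show ?thesis by metis
qed

lemma summable_amp_if_vanishes_above:
  assumes "coins C" "nontrivial_coins C" "summable (\<lambda>n. (norm (amp C e0 n))\<^sup>2)"
    and "vanishes_above B \<psi>"
  shows "summable (\<lambda>n. (norm (amp C \<psi> n))\<^sup>2)"
proof -
  obtain N where "cyclic_span C (qrw_pow C N \<psi>)"
    using reaches_cyclic_span_if_vanishes_above[OF assms(2,4)]
    unfolding reaches_cyclic_span_def by blast
  then have "summable (\<lambda>n. (norm (braket (qrw_pow C n (qrw_pow C N \<psi>)) (qrw_pow C N \<psi>)))\<^sup>2)"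
    using summable_braket_cyclic_span[OF assms(1,3)] by blast
  moreover have "braket (qrw_pow C n (qrw_pow C N \<psi>)) (qrw_pow C N \<psi>) = amp C \<psi> n" for n
  proof -
    have "vanishes_above (B + 2 * n) (qrw_pow C n \<psi>)"
      by (rule vanishes_above_qrw_pow[OF assms(4)])
    moreover have "vanishes_above (B + 2 * n) \<psi>"
      by (rule vanishes_above_mono[OF assms(4)]) simp
    moreover have "qrw_pow C n (qrw_pow C N \<psi>) = qrw_pow C N (qrw_pow C n \<psi>)"
      by (simp add: qrw_pow_add[symmetric] add.commute)
    ultimately show ?thesis
      by (simp add: braket_qrw_pow[OF assms(1)] amp_eq_braket)
  qed
  ultimately show ?thesis by simp
qed

lemma transient_iff_summable_amp:
  "transient C \<psi> \<longleftrightarrow> summable (\<lambda>n. (norm (amp C \<psi> n))\<^sup>2)"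
  unfolding transient_def recurrent_def
  by (simp add: summable_Suc_iff[of "\<lambda>n. (norm (amp C \<psi> n))\<^sup>2"])

lemma local_state_imp_vanishes_above: "local_state \<psi> \<Longrightarrow> \<exists>B. vanishes_above B \<psi>"
  unfolding local_state_def vanishes_above_def
  by (metis (mono_tags) finite_nat_set_iff_bounded_le mem_Collect_eq not_le)

lemma local_state_e0: "local_state e0"
proof -
  have "(\<lambda>k. (norm (e0 k))\<^sup>2) summable_on UNIV \<longleftrightarrow> (\<lambda>k. (norm (e0 k))\<^sup>2) summable_on {0}"
    by (rule summable_on_cong_neutral) (auto simp: e0_def)
  moreover have "(\<Sum>\<^sub>\<infinity>k. (norm (e0 k))\<^sup>2) = (\<Sum>k\<in>{0}. (norm (e0 k))\<^sup>2)"
    by (rule infsum_eq_sum_if_vanishes_outside) (auto simp: e0_def)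
  moreover have "finite {k. e0 k \<noteq> 0}"
    unfolding e0_def by auto
  ultimately show ?thesis
    unfolding local_state_def is_state_def by (simp add: e0_def)
qed

theorem corollary1:
  fixes C :: "nat \<Rightarrow> nat \<Rightarrow> nat \<Rightarrow> complex"
  assumes "coins C" and "nontrivial_coins C"
  shows "(\<forall>\<psi>. local_state \<psi> \<longrightarrow> transient C \<psi>) \<longleftrightarrow> transient C e0"
proof
  assume "\<forall>\<psi>. local_state \<psi> \<longrightarrow> transient C \<psi>"
  then show "transient C e0" using local_state_e0 by blast
next
  assume "transient C e0"
  then have "summable (\<lambda>n. (norm (amp C e0 n))\<^sup>2)"
    by (simp add: transient_iff_summable_amp)
  then show "\<forall>\<psi>. local_state \<psi> \<longrightarrow> transient C \<psi>"
    using summable_amp_if_vanishes_above[OF assms] local_state_imp_vanishes_above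
    by (metis transient_iff_summable_amp)
qed

end
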